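(* Let $\varphi:\mathbb{R}^n\times\mathbb{R}^m\to\mathbb{R}\cup\{+\infty\}$ be a closed proper convex function and $L(x,\lambda)=\inf_u\{\varphi(x,u)-\langle\lambda,u\rangle\}$. Let $(x^*,\lambda^* )$ be a saddle point of $L$, i.e. $L(x^*,\lambda)\leqslant L(x^*,\lambda^* )\leqslant L(x,\lambda^* )$ for all $x,\lambda$. Let $H\in\mathbb{R}^{m\times m}$ be symmetric positive definite and let $(A_k),(a_k),(b_k),(c_k)$, $k\geqslant0$, be real sequences with $a_k>0$, $b_k\geqslant0$, $c_k>0$ and $$A_{k+1}-A_k=a_k,\quad A_k=a_kb_k,\quad A_0=b_0=0,\quad c_k\geqslant a_k.$$ Let $\lambda_0\in\mathbb{R}^m$, $z_0=\lambda_0$, and for $k\geqslant0$ $$\tilde\lambda_{k+1}=\frac{1}{b_k+1}z_k+\frac{b_k}{b_k+1}\lambda_k,$$ $$(x_{k+1},u_{k+1})\in\arg\min_{x,u}\Big\{\varphi(x,u)-\langle\tilde\lambda_{k+1},u\rangle+\frac{c_k}{2(b_k+1)}\|u\|_H^2\Big\},$$ $$\lambda_{k+1}=\tilde\lambda_{k+1}-\frac{c_k}{b_k+1}Hu_{k+1},\qquad z_{k+1}=z_k+\frac{a_k}{c_k}(b_k+1)(\lambda_{k+1}-\tilde\lambda_{k+1})\;(=z_k-a_kHu_{k+1}),$$ where the minimizers are assumed to exist. Then for every $k\geqslant1$, $$L(x^*,\lambda^* )-L(x_k,\lambda_k)\leqslant\frac{\|\lambda_0-\lambda^*\|^2_{H^{-1}}}{2A_k},$$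 and for every $k\geqslant0$, $$\min_{0\leqslant j\leqslant k}\|u_{j+1}\|_H^2\leqslant\frac{\|\lambda_0-\lambda^*\|^2_{H^{-1}}}{\sum_{j=0}^ka_j^2}.$$
   Context: $\|u\|_M^2=u^{\mathrm T}Mu$ for a symmetric positive definite matrix $M$. $\varphi$ plays the role of a perturbation function of an objective $f(x)=\varphi(x,0)$. *)

theory Defs
  imports "HOL-Analysis.Analysis"
begin

definition epigraph_e :: "('a \<Rightarrow> ereal) \<Rightarrow> ('a \<times> real) set" where
  "epigraph_e f = {(p, y). f p \<le> ereal y}"

definition convex_fun_e :: "('a::real_vector \<Rightarrow> ereal) \<Rightarrow> bool" where
  "convex_fun_e f \<longleftrightarrow> convex (epigraph_e f)"

definition closed_fun_e :: "('a::topological_space \<Rightarrow> ereal) \<Rightarrow> bool" where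
  "closed_fun_e f \<longleftrightarrow> closed (epigraph_e f)"

definition proper_fun_e :: "('a \<Rightarrow> ereal) \<Rightarrow> bool" where
  "proper_fun_e f \<longleftrightarrow> (\<forall>p. f p \<noteq> -\<infinity>) \<and> (\<exists>p. f p \<noteq> \<infinity>)"

definition lagr :: "('x \<Rightarrow> real^'m \<Rightarrow> ereal) \<Rightarrow> 'x \<Rightarrow> real^'m \<Rightarrow> ereal" where
  "lagr \<phi> x l = (INF u. \<phi> x u - ereal (l \<bullet> u))"

definition wnorm2 :: "real^'m^'m \<Rightarrow> real^'m \<Rightarrow> real" where
  "wnorm2 M u = u \<bullet> (M *v u)"

definition sym_posdef :: "real^'m^'m \<Rightarrow> bool" where
  "sym_posdef M \<longleftrightarrow> transpose M = M \<and> (\<forall>u. u \<noteq> 0 \<longrightarrow> u \<bullet> (M *v u) > 0)"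

end

theory Submission
  imports Defs
begin

text \<open>
  The optimality condition of the proximal step says that (0, lam_(k+1)) is a subgradient of
  \<phi> at (x_(k+1), u_(k+1)). Hence x_(k+1) minimizes L(-, lam_(k+1)), with minimal value
  \<phi>(x_(k+1), u_(k+1)) - <lam_(k+1), u_(k+1)>, which yields two estimates linear in u_(k+1):
  against the saddle value and against the previous iterate. Weighted by a_k and A_k and
  combined with z_(k+1) = z_k - a_k H u_(k+1), they show that the energy
  A_k (L(x*, lam*) - L(x_k, lam_k)) + |z_k - lam*|^2_(H^-1) / 2 decreases by at least
  a_k^2 |u_(k+1)|^2_H / 2 in each step (this is where c_k \<ge> a_k enters).
  Both bounds follow by telescoping.
\<close>

lemma inner_symmetric_matrix:
  fixes H :: "real^'m^'m"
  assumes "transpose H = H"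
  shows "x \<bullet> (H *v y) = y \<bullet> (H *v x)"
proof -
  have "x \<bullet> (H *v y) = (x v* H) \<bullet> y" by (simp add: dot_lmul_matrix)
  also have "x v* H = H *v x" using vector_transpose_matrix[of x H] assms by simp
  finally show ?thesis by (simp add: inner_commute)
qed

lemma wnorm2_add:
  fixes H :: "real^'m^'m"
  assumes "transpose H = H"
  shows "wnorm2 H (v + w) = wnorm2 H v + 2 * ((H *v v) \<bullet> w) + wnorm2 H w"
  using inner_symmetric_matrix[OF assms, of v w]
  by (simp add: wnorm2_def matrix_vector_right_distrib inner_add_left inner_add_right inner_commute)

lemma wnorm2_scaleR: "wnorm2 H (t *\<^sub>R v) = t\<^sup>2 * wnorm2 H v"
  by (simp add: wnorm2_def matrix_vector_mult_scaleR power2_eq_square)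

lemma wnorm2_nonneg: "sym_posdef H \<Longrightarrow> 0 \<le> wnorm2 H v"
  unfolding sym_posdef_def wnorm2_def by (cases "v = 0") (auto intro: less_imp_le)

lemma sym_posdef_matrix_inv:
  assumes "sym_posdef H"
  shows "matrix_inv H ** H = mat 1" and "H ** matrix_inv H = mat 1"
proof -
  have "\<exists>B. B ** H = mat 1"
    unfolding matrix_left_invertible_ker
    using assms by (metis inner_zero_right less_irrefl sym_posdef_def)
  then have "invertible H" by (simp add: invertible_left_inverse)
  then have "H ** matrix_inv H = mat 1 \<and> matrix_inv H ** H = mat 1"
    unfolding invertible_def matrix_inv_def by (rule someI_ex)
  then show "matrix_inv H ** H = mat 1" and "H ** matrix_inv H = mat 1" by auto
qed

lemma wnorm2_matrix_inv_nonneg: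
  assumes "sym_posdef H"
  shows "0 \<le> wnorm2 (matrix_inv H) v"
proof -
  have "wnorm2 (matrix_inv H) v = wnorm2 H (matrix_inv H *v v)"
    by (simp add: wnorm2_def matrix_vector_mul_assoc sym_posdef_matrix_inv[OF assms] inner_commute)
  then show ?thesis using wnorm2_nonneg[OF assms] by simp
qed

lemma wnorm2_matrix_inv_diff:
  assumes "sym_posdef H"
  shows "wnorm2 (matrix_inv H) (w - t *\<^sub>R (H *v v))
    = wnorm2 (matrix_inv H) w - 2 * t * (w \<bullet> v) + t\<^sup>2 * wnorm2 H v"
proof -
  have HM: "H *v (matrix_inv H *v w) = w" and MH: "matrix_inv H *v (H *v v) = v"
    by (simp_all add: matrix_vector_mul_assoc sym_posdef_matrix_inv[OF assms])
  have "(H *v v) \<bullet> (matrix_inv H *v w) = v \<bullet> w"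
    using inner_symmetric_matrix[of H "matrix_inv H *v w" v] assms
    by (simp add: sym_posdef_def HM inner_commute)
  then show ?thesis
    by (simp add: wnorm2_def matrix_vector_mult_diff_distrib matrix_vector_mult_scaleR MH
        inner_diff_left inner_diff_right power2_eq_square algebra_simps inner_commute)
qed

lemma le_of_le_plus_vanishing_multiple:
  fixes x y c :: real
  assumes "\<And>t. 0 < t \<Longrightarrow> t \<le> 1 \<Longrightarrow> y \<le> x + t * c"
  shows "y \<le> x"
proof (rule field_le_epsilon)
  fix e :: real assume "0 < e"
  show "y \<le> x + e"
  proof (cases "c \<le> 0")
    case True
    then show ?thesis using assms[of 1] \<open>0 < e\<close> by simp
  next
    case False
    define t where "t = min 1 (e / c)"
    have "0 < t" "t \<le> 1" using \<open>0 < e\<close> False by (auto simp: t_def)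
    moreover have "t * c \<le> e" using False by (simp add: t_def min_mult_distrib_right)
    ultimately show ?thesis using assms[of t] by simp
  qed
qed

lemma convex_fun_e_combination_le:
  assumes "convex_fun_e f" and "f p \<le> ereal \<alpha>" and "f q \<le> ereal \<beta>" and "0 \<le> t" and "t \<le> 1"
  shows "f ((1 - t) *\<^sub>R p + t *\<^sub>R q) \<le> ereal ((1 - t) * \<alpha> + t * \<beta>)"
proof -
  have "(1 - t) *\<^sub>R (p, \<alpha>) + t *\<^sub>R (q, \<beta>) \<in> epigraph_e f"
    using assms by (intro convexD[OF assms(1)[unfolded convex_fun_e_def]]) (auto simp: epigraph_e_def)
  then show ?thesis by (simp add: epigraph_e_def)
qed

lemma prox_minimizer_subgradient:
  fixes \<phi> :: "'a::real_vector \<Rightarrow> real^'m \<Rightarrow> ereal" and H :: "real^'m^'m"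
  assumes cvx: "convex_fun_e (\<lambda>(x, u). \<phi> x u)"
    and no_minf: "\<And>x u. \<phi> x u \<noteq> -\<infinity>"
    and Hs: "transpose H = H"
    and fin: "\<phi> x0 u0 = ereal f0"
    and min: "\<And>x' u'. \<phi> x0 u0 - ereal (l \<bullet> u0) + ereal (r * wnorm2 H u0)
        \<le> \<phi> x' u' - ereal (l \<bullet> u') + ereal (r * wnorm2 H u')"
  shows "ereal (f0 + (l - (2 * r) *\<^sub>R (H *v u0)) \<bullet> (u' - u0)) \<le> \<phi> x' u'"
proof (cases "\<phi> x' u'")
  case (real f1)
  define d where "d = u' - u0"
  define g where "g = l \<bullet> d - 2 * r * ((H *v u0) \<bullet> d)"
  \<comment> \<open>compare with the points (1 - t)(x0, u0) + t(x', u') and let t tend to 0\<close>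
  have "g \<le> f1 - f0 + t * (r * wnorm2 H d)" if t: "0 < t" "t \<le> 1" for t
  proof -
    define xt where "xt = (1 - t) *\<^sub>R x0 + t *\<^sub>R x'"
    have ut: "(1 - t) *\<^sub>R u0 + t *\<^sub>R u' = u0 + t *\<^sub>R d"
      by (simp add: d_def algebra_simps)
    have "\<phi> xt (u0 + t *\<^sub>R d) \<le> ereal ((1 - t) * f0 + t * f1)"
      using convex_fun_e_combination_le[OF cvx, of "(x0, u0)" f0 "(x', u')" f1 t] fin real t
      by (simp add: xt_def ut)
    moreover have "ereal (f0 - l \<bullet> u0 + r * wnorm2 H u0)
        \<le> \<phi> xt (u0 + t *\<^sub>R d) - ereal (l \<bullet> (u0 + t *\<^sub>R d)) + ereal (r * wnorm2 H (u0 + t *\<^sub>R d))"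
      using min[of xt "u0 + t *\<^sub>R d"] fin by simp
    ultimately have "f0 - l \<bullet> u0 + r * wnorm2 H u0
        \<le> (1 - t) * f0 + t * f1 - l \<bullet> (u0 + t *\<^sub>R d) + r * wnorm2 H (u0 + t *\<^sub>R d)"
      using no_minf[of xt "u0 + t *\<^sub>R d"] by (cases "\<phi> xt (u0 + t *\<^sub>R d)") auto
    then have "t * g \<le> t * (f1 - f0 + t * (r * wnorm2 H d))"
      by (simp add: g_def wnorm2_add[OF Hs] wnorm2_scaleR inner_add_right power2_eq_square algebra_simps)
    then show ?thesis using t by simp
  qed
  then have "g \<le> f1 - f0" by (rule le_of_le_plus_vanishing_multiple)
  then show ?thesis
    using real by (simp add: g_def d_def inner_diff_left)
qed (use no_minf in auto)

lemma lagr_le: "lagr \<phi> x l \<le> \<phi> x u - ereal (l \<bullet> u)"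
  unfolding lagr_def by (rule INF_lower) simp

lemma lagr_ge_of_affine_minorant:
  assumes "\<And>u'. ereal (f + l \<bullet> (u' - u)) \<le> \<phi> x u'"
  shows "ereal (f - l \<bullet> u) \<le> lagr \<phi> x l"
  unfolding lagr_def
proof (rule INF_greatest)
  fix u'
  have "ereal (f - l \<bullet> u) = ereal (f + l \<bullet> (u' - u)) - ereal (l \<bullet> u')"
    by (simp add: inner_diff_right)
  also have "\<dots> \<le> \<phi> x u' - ereal (l \<bullet> u')"
    using assms by (rule ereal_minus_mono) simp
  finally show "ereal (f - l \<bullet> u) \<le> \<phi> x u' - ereal (l \<bullet> u')" .
qed

locale accelerated_alm =
  fixes \<phi> :: "real^'n \<Rightarrow> real^'m \<Rightarrow> ereal"
    and xs :: "real^'n" and ls :: "real^'m"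
    and H :: "real^'m^'m"
    and A a b c :: "nat \<Rightarrow> real"
    and lam lt z :: "nat \<Rightarrow> real^'m"
    and x :: "nat \<Rightarrow> real^'n" and u :: "nat \<Rightarrow> real^'m"
  assumes cvx: "convex_fun_e (\<lambda>(x, u). \<phi> x u)"
    and proper: "proper_fun_e (\<lambda>(x, u). \<phi> x u)"
    and saddle: "\<And>x' l'. lagr \<phi> xs l' \<le> lagr \<phi> xs ls \<and> lagr \<phi> xs ls \<le> lagr \<phi> x' ls"
    and H: "sym_posdef H"
    and a_pos: "\<And>k. a k > 0" and b_nn: "\<And>k. b k \<ge> 0" and c_pos: "\<And>k. c k > 0"
    and A_step: "\<And>k. A (Suc k) - A k = a k"
    and A_ab: "\<And>k. A k = a k * b k"
    and A0: "A 0 = 0"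
    and c_ge: "\<And>k. c k \<ge> a k"
    and z0: "z 0 = lam 0"
    and lt_def: "\<And>k. lt (Suc k) = (1 / (b k + 1)) *\<^sub>R z k + (b k / (b k + 1)) *\<^sub>R lam k"
    and argmin: "\<And>k x' u'.
        \<phi> (x (Suc k)) (u (Suc k)) - ereal (lt (Suc k) \<bullet> u (Suc k))
          + ereal (c k / (2 * (b k + 1)) * wnorm2 H (u (Suc k)))
        \<le> \<phi> x' u' - ereal (lt (Suc k) \<bullet> u') + ereal (c k / (2 * (b k + 1)) * wnorm2 H u')"
    and lam_def: "\<And>k. lam (Suc k) = lt (Suc k) - (c k / (b k + 1)) *\<^sub>R (H *v u (Suc k))"
    and z_def: "\<And>k. z (Suc k) = z k + (a k / c k * (b k + 1)) *\<^sub>R (lam (Suc k) - lt (Suc k))"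
begin

definition fval :: "nat \<Rightarrow> real" where
  "fval k = real_of_ereal (\<phi> (x (Suc k)) (u (Suc k)))"

definition Lval :: "nat \<Rightarrow> real" where
  "Lval k = real_of_ereal (lagr \<phi> (x k) (lam k))"

definition Lopt :: real where
  "Lopt = real_of_ereal (lagr \<phi> xs ls)"

text \<open>\<open>Lval 0\<close> is meaningless, as \<open>x 0\<close> is no iterate, but it is weighted by \<open>A 0 = 0\<close>.\<close>

definition energy :: "nat \<Rightarrow> real" where
  "energy k = A k * (Lopt - Lval k) + wnorm2 (matrix_inv H) (z k - ls) / 2"

lemma phi_never_minf: "\<phi> x' u' \<noteq> -\<infinity>"
  using proper by (simp add: proper_fun_e_def)

lemma phi_iterate: "\<phi> (x (Suc k)) (u (Suc k)) = ereal (fval k)"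
proof -
  obtain p where p: "\<phi> (fst p) (snd p) \<noteq> \<infinity>"
    using proper by (auto simp: proper_fun_e_def split: prod.splits)
  have "\<phi> (x (Suc k)) (u (Suc k)) \<noteq> \<infinity>"
    using argmin[of k "fst p" "snd p"] p phi_never_minf[of "fst p" "snd p"]
    by (cases "\<phi> (fst p) (snd p)"; cases "\<phi> (x (Suc k)) (u (Suc k))") auto
  then show ?thesis
    using phi_never_minf[of "x (Suc k)" "u (Suc k)"] unfolding fval_def
    by (cases "\<phi> (x (Suc k)) (u (Suc k))") auto
qed

lemma iterate_subgradient: "ereal (fval k + lam (Suc k) \<bullet> (u' - u (Suc k))) \<le> \<phi> x' u'"
proof -
  have "2 * (c k / (2 * (b k + 1))) = c k / (b k + 1)"
    by (simp only: times_divide_eq_right mult_divide_mult_cancel_left_if) simp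
  then have "lam (Suc k) = lt (Suc k) - (2 * (c k / (2 * (b k + 1)))) *\<^sub>R (H *v u (Suc k))"
    using lam_def[of k] by simp
  then show ?thesis
    using prox_minimizer_subgradient[OF cvx phi_never_minf _ phi_iterate argmin, of k u' x'] H
    by (simp add: sym_posdef_def)
qed

lemma iterate_value_le_lagr: "ereal (fval k - lam (Suc k) \<bullet> u (Suc k)) \<le> lagr \<phi> x' (lam (Suc k))"
  by (rule lagr_ge_of_affine_minorant) (rule iterate_subgradient)

lemma lagr_iterate: "lagr \<phi> (x (Suc k)) (lam (Suc k)) = ereal (fval k - lam (Suc k) \<bullet> u (Suc k))"
  using iterate_value_le_lagr[of k "x (Suc k)"]
    lagr_le[where \<phi>=\<phi> and x="x (Suc k)" and l="lam (Suc k)" and u="u (Suc k)"]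
  by (simp add: phi_iterate)

lemma Lval_Suc: "Lval (Suc k) = fval k - lam (Suc k) \<bullet> u (Suc k)"
  by (simp add: Lval_def lagr_iterate)

lemma lagr_saddle: "lagr \<phi> xs ls = ereal Lopt"
proof -
  have "ereal (fval 0 - lam 1 \<bullet> u 1) \<le> lagr \<phi> xs ls"
    using iterate_value_le_lagr[of 0 xs] saddle[where l'="lam 1"] by (auto intro: order_trans)
  moreover have "lagr \<phi> xs ls \<le> ereal (fval 0 - ls \<bullet> u 1)"
    using saddle[where x'="x 1"] lagr_le[where \<phi>=\<phi> and x="x 1" and l=ls and u="u 1"]
    by (auto simp: phi_iterate[of 0] intro: order_trans)
  ultimately show ?thesis
    unfolding Lopt_def by (cases "lagr \<phi> xs ls") auto
qed

lemma Lval_le_Lopt: "Lval (Suc k) \<le> Lopt"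
proof -
  have "ereal (Lval (Suc k)) \<le> lagr \<phi> xs (lam (Suc k))"
    using iterate_value_le_lagr[of k xs] by (simp add: Lval_Suc)
  also have "\<dots> \<le> ereal Lopt" using saddle lagr_saddle by metis
  finally show ?thesis by simp
qed

lemma Lopt_le_Lval: "Lopt \<le> Lval (Suc k) + (lam (Suc k) - ls) \<bullet> u (Suc k)"
proof -
  have "ereal Lopt \<le> lagr \<phi> (x (Suc k)) ls" using saddle lagr_saddle by metis
  also have "\<dots> \<le> ereal (fval k - ls \<bullet> u (Suc k))"
    using lagr_le[where \<phi>=\<phi> and x="x (Suc k)" and l=ls and u="u (Suc k)"]
    by (simp add: phi_iterate)
  finally show ?thesis by (simp add: Lval_Suc inner_diff_left)
qed

lemma Lval_le_Lval: "Lval (Suc j) \<le> Lval (Suc k) + (lam (Suc k) - lam (Suc j)) \<bullet> u (Suc k)"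
proof -
  have "ereal (Lval (Suc j)) \<le> lagr \<phi> (x (Suc k)) (lam (Suc j))"
    using iterate_value_le_lagr[of j "x (Suc k)"] by (simp add: Lval_Suc)
  also have "\<dots> \<le> ereal (fval k - lam (Suc j) \<bullet> u (Suc k))"
    using lagr_le[where \<phi>=\<phi> and x="x (Suc k)" and l="lam (Suc j)" and u="u (Suc k)"]
    by (simp add: phi_iterate)
  finally show ?thesis by (simp add: Lval_Suc inner_diff_left)
qed

lemma A_Suc: "A (Suc k) = a k * (b k + 1)"
  using A_step[of k] A_ab[of k] by (simp add: algebra_simps)

lemma A_nonneg: "0 \<le> A k"
  using A_ab[of k] a_pos[of k] b_nn[of k] by simp

lemma lam_step: "(b k + 1) *\<^sub>R lam (Suc k) = z k + b k *\<^sub>R lam k - c k *\<^sub>R (H *v u (Suc k))"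
proof -
  have "b k + 1 \<noteq> 0" using b_nn[of k] by simp
  then show ?thesis
    by (simp add: lam_def lt_def scaleR_right_diff_distrib scaleR_add_right)
qed

lemma z_step: "z (Suc k) = z k - a k *\<^sub>R (H *v u (Suc k))"
proof -
  have "b k + 1 \<noteq> 0" "c k \<noteq> 0" using b_nn[of k] c_pos[of k] by auto
  then show ?thesis
    by (simp add: z_def lam_def)
qed

lemma gap_step:
  "A (Suc k) * (Lopt - Lval (Suc k))
    \<le> A k * (Lopt - Lval k) + a k * ((z k - ls) \<bullet> u (Suc k)) - a k * c k * wnorm2 H (u (Suc k))"
proof -
  define v where "v = u (Suc k)"
  have old: "A k * (Lopt - Lval (Suc k)) \<le> A k * (Lopt - Lval k) + A k * ((lam (Suc k) - lam k) \<bullet> v)"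
  proof (cases k)
    case 0
    then show ?thesis by (simp add: A0)
  next
    case (Suc j)
    then have "A k * Lval k \<le> A k * (Lval (Suc k) + (lam (Suc k) - lam k) \<bullet> v)"
      using Lval_le_Lval[of j k] A_nonneg[of k] by (simp add: v_def mult_left_mono)
    then show ?thesis by (simp add: algebra_simps)
  qed
  have new: "a k * (Lopt - Lval (Suc k)) \<le> a k * ((lam (Suc k) - ls) \<bullet> v)"
    using Lopt_le_Lval[of k] a_pos[of k] by (simp add: v_def)
  have "A k * ((lam (Suc k) - lam k) \<bullet> v) + a k * ((lam (Suc k) - ls) \<bullet> v)
      = a k * (((b k + 1) *\<^sub>R lam (Suc k) - b k *\<^sub>R lam k - ls) \<bullet> v)"
    by (simp add: A_ab inner_diff_left algebra_simps)
  also have "(b k + 1) *\<^sub>R lam (Suc k) - b k *\<^sub>R lam k - ls = (z k - ls) - c k *\<^sub>R (H *v v)"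
    by (simp add: lam_step v_def)
  also have "a k * (((z k - ls) - c k *\<^sub>R (H *v v)) \<bullet> v) = a k * ((z k - ls) \<bullet> v) - a k * c k * wnorm2 H v"
    by (simp add: wnorm2_def inner_diff_left inner_commute algebra_simps)
  finally show ?thesis
    using old new A_step[of k] by (simp add: v_def algebra_simps)
qed

lemma energy_step: "energy (Suc k) + (a k)\<^sup>2 / 2 * wnorm2 H (u (Suc k)) \<le> energy k"
proof -
  define v where "v = u (Suc k)"
  define w where "w = z k - ls"
  have "wnorm2 (matrix_inv H) (z (Suc k) - ls)
      = wnorm2 (matrix_inv H) w - 2 * a k * (w \<bullet> v) + (a k)\<^sup>2 * wnorm2 H v"
    using wnorm2_matrix_inv_diff[OF H, of w "a k" v] by (simp add: z_step w_def v_def algebra_simps)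
  moreover have "(a k)\<^sup>2 * wnorm2 H v \<le> a k * c k * wnorm2 H v"
    using a_pos[of k] c_ge[of k] wnorm2_nonneg[OF H, of v]
    by (simp add: power2_eq_square mult_left_mono mult_right_mono)
  ultimately show ?thesis
    using gap_step[of k] unfolding energy_def v_def w_def by (simp add: algebra_simps)
qed

lemma energy_telescope:
  "energy k + (\<Sum>j<k. (a j)\<^sup>2 / 2 * wnorm2 H (u (Suc j))) \<le> wnorm2 (matrix_inv H) (lam 0 - ls) / 2"
proof (induction k)
  case 0
  then show ?case by (simp add: energy_def A0 z0)
next
  case (Suc k)
  then show ?case using energy_step[of k] by simp
qed

lemma residual_sum_nonneg: "0 \<le> (\<Sum>j<k. (a j)\<^sup>2 / 2 * wnorm2 H (u (Suc j)))"
  by (intro sum_nonneg mult_nonneg_nonneg wnorm2_nonneg[OF H]) simp_all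

lemma lagrangian_gap_bound:
  assumes "1 \<le> k"
  shows "lagr \<phi> xs ls - lagr \<phi> (x k) (lam k) \<le> ereal (wnorm2 (matrix_inv H) (lam 0 - ls) / (2 * A k))"
proof -
  obtain j where k: "k = Suc j" using assms by (cases k) auto
  have "0 < A k" using A_Suc[of j] a_pos[of j] b_nn[of j] k by simp
  moreover have "A k * (Lopt - Lval k) \<le> wnorm2 (matrix_inv H) (lam 0 - ls) / 2"
    using energy_telescope[of k] residual_sum_nonneg[of k] wnorm2_matrix_inv_nonneg[OF H, of "z k - ls"]
    by (simp add: energy_def)
  ultimately have "Lopt - Lval k \<le> wnorm2 (matrix_inv H) (lam 0 - ls) / (2 * A k)"
    by (simp add: field_simps)
  then show ?thesis
    by (simp add: lagr_saddle k lagr_iterate Lval_Suc)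
qed

lemma min_residual_bound:
  "(MIN j\<in>{0..k}. wnorm2 H (u (Suc j))) \<le> wnorm2 (matrix_inv H) (lam 0 - ls) / (\<Sum>j=0..k. (a j)\<^sup>2)"
proof -
  define m where "m = (MIN j\<in>{0..k}. wnorm2 H (u (Suc j)))"
  have "0 \<le> energy (Suc k)"
    using A_nonneg[of "Suc k"] Lval_le_Lopt[of k] wnorm2_matrix_inv_nonneg[OF H, of "z (Suc k) - ls"]
    by (simp add: energy_def)
  then have "(\<Sum>j<Suc k. (a j)\<^sup>2 / 2 * wnorm2 H (u (Suc j))) \<le> wnorm2 (matrix_inv H) (lam 0 - ls) / 2"
    using energy_telescope[of "Suc k"] by simp
  moreover have "{..<Suc k} = {0..k}" by auto
  ultimately have "(\<Sum>j=0..k. (a j)\<^sup>2 * wnorm2 H (u (Suc j))) \<le> wnorm2 (matrix_inv H) (lam 0 - ls)"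
    by (simp add: sum_divide_distrib[symmetric])
  moreover have "m \<le> wnorm2 H (u (Suc j))" if "j \<in> {0..k}" for j
    unfolding m_def using that by (intro Min_le) auto
  then have "m * (\<Sum>j=0..k. (a j)\<^sup>2) \<le> (\<Sum>j=0..k. (a j)\<^sup>2 * wnorm2 H (u (Suc j)))"
    unfolding sum_distrib_left by (intro sum_mono) (auto simp: mult.commute intro: mult_right_mono)
  moreover have "0 < (\<Sum>j=0..k. (a j)\<^sup>2)"
    by (intro sum_pos zero_less_power a_pos) simp_all
  ultimately show ?thesis
    unfolding m_def[symmetric] by (simp add: field_simps)
qed

end

theorem theorem8:
  fixes \<phi> :: "real^'n \<Rightarrow> real^'m \<Rightarrow> ereal"
    and xs :: "real^'n" and ls :: "real^'m"
    and H :: "real^'m^'m"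
    and A a b c :: "nat \<Rightarrow> real"
    and lam lt z :: "nat \<Rightarrow> real^'m"
    and x :: "nat \<Rightarrow> real^'n" and u :: "nat \<Rightarrow> real^'m"
  assumes cvx: "convex_fun_e (\<lambda>(x, u). \<phi> x u)"
    and clsd: "closed_fun_e (\<lambda>(x, u). \<phi> x u)"
    and proper: "proper_fun_e (\<lambda>(x, u). \<phi> x u)"
    and saddle: "\<And>x' l'. lagr \<phi> xs l' \<le> lagr \<phi> xs ls \<and> lagr \<phi> xs ls \<le> lagr \<phi> x' ls"
    and H: "sym_posdef H"
    and a_pos: "\<And>k. a k > 0" and b_nn: "\<And>k. b k \<ge> 0" and c_pos: "\<And>k. c k > 0"
    and A_step: "\<And>k. A (Suc k) - A k = a k"
    and A_ab: "\<And>k. A k = a k * b k"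
    and A0: "A 0 = 0" and b0: "b 0 = 0"
    and c_ge: "\<And>k. c k \<ge> a k"
    and z0: "z 0 = lam 0"
    and lt_def: "\<And>k. lt (Suc k) = (1 / (b k + 1)) *\<^sub>R z k + (b k / (b k + 1)) *\<^sub>R lam k"
    and argmin: "\<And>k x' u'.
        \<phi> (x (Suc k)) (u (Suc k)) - ereal (lt (Suc k) \<bullet> u (Suc k))
          + ereal (c k / (2 * (b k + 1)) * wnorm2 H (u (Suc k)))
        \<le> \<phi> x' u' - ereal (lt (Suc k) \<bullet> u') + ereal (c k / (2 * (b k + 1)) * wnorm2 H u')"
    and lam_def: "\<And>k. lam (Suc k) = lt (Suc k) - (c k / (b k + 1)) *\<^sub>R (H *v u (Suc k))"
    and z_def: "\<And>k. z (Suc k) = z k + (a k / c k * (b k + 1)) *\<^sub>R (lam (Suc k) - lt (Suc k))"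
  shows "(\<forall>k\<ge>1. lagr \<phi> xs ls - lagr \<phi> (x k) (lam k)
            \<le> ereal (wnorm2 (matrix_inv H) (lam 0 - ls) / (2 * A k)))
       \<and> (\<forall>k. (MIN j\<in>{0..k}. wnorm2 H (u (Suc j)))
            \<le> wnorm2 (matrix_inv H) (lam 0 - ls) / (\<Sum>j=0..k. (a j)^2))"
proof -
  \<comment> \<open>Closedness only serves the existence of the minimizers, which is assumed; \<open>b 0 = 0\<close> is implied by \<open>A 0 = 0\<close>.\<close>
  interpret accelerated_alm \<phi> xs ls H A a b c lam lt z x u
    by unfold_locales (fact assms)+
  show ?thesis
    using lagrangian_gap_bound min_residual_bound by blast
qed

end
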